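(* Let $k\ge1$ and $d\ge1$ be integers, let $f:\mathbb{R}\to\mathbb{R}$ be $(1,[0,1])$-triangle, and define $h:\mathbb{R}^d\to\mathbb{R}$ by $h(x):=f^k(x_1)$, where $f^k$ is the $k$-fold composition of $f$. For every $y\in\mathbb{R}^{d-1}$ define $p_y:\mathbb{R}\to\mathbb{R}^d$ by $p_y(z):=(z,y)$. Then there exist Borel probability measures $\mu$ and $\nu$ on $[0,1]^d$, where $\nu$ is the uniform distribution on $2^k+1$ points and $\mu$ is continuous and positive on exactly $[0,1]^d$ (it has a Lebesgue density positive on $[0,1]^d$ and zero elsewhere), such that every $g:\mathbb{R}^d\to\mathbb{R}$ with $\mathrm{Cr}(g\circ p_y)\le 2^{k-2}$ for every $y\in\mathbb{R}^{d-1}$ satisfies \[ \int|h-g|\,d\mu\ge\frac1{32},\qquad \int|\tilde h-\tilde g|\,d\mu\ge\frac18,\qquad \int|h-g|\,d\nu\ge\frac18,\qquad \int|\tilde h-\tilde g|\,d\nu\ge\frac14. \]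
   Context: For a real-valued function $u$ let $\tilde u(x)=\mathbf{1}[u(x)\ge1/2]$. For $u:\mathbb{R}\to\mathbb{R}$, the crossing number $\mathrm{Cr}(u)$ is the minimum number of intervals in a partition of $\mathbb{R}$ into intervals on each of which $\tilde u$ is constant. A function $f$ is $(t,[a,b])$-triangle if it is continuous on $[a,b]$ and there are points $a=a_1<a_2<\dots<a_{2t+1}=b$ with $f(a_i)=f(a_{i+2})$ for $1\le i\le 2t-1$, $f(a_1)=0$, $f(a_2)=1$, $f$ strictly increasing on $[a_i,a_{i+1}]$ for odd $i$ and strictly decreasing on $[a_i,a_{i+1}]$ for even $i$. *)

theory Defs
  imports "HOL-Analysis.Analysis" "HOL-Probability.Probability"
begin

definition thr :: "('a \<Rightarrow> real) \<Rightarrow> 'a \<Rightarrow> real" where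
  "thr u x = (if u x \<ge> 1/2 then 1 else 0)"

definition Cr :: "(real \<Rightarrow> real) \<Rightarrow> enat" where
  "Cr u = (INF P \<in> {P. finite P \<and> {} \<notin> P \<and> disjoint P \<and> \<Union>P = UNIV \<and>
              (\<forall>I\<in>P. is_interval I \<and> (\<forall>x\<in>I. \<forall>y\<in>I. thr u x = thr u y))}.
             enat (card P))"

text \<open>(t,[a,b])-triangle functions; the points a_1 < ... < a_(2t+1) are p 1, ..., p (2t+1).\<close>
definition triangle :: "nat \<Rightarrow> real \<Rightarrow> real \<Rightarrow> (real \<Rightarrow> real) \<Rightarrow> bool" where
  "triangle t a b f \<longleftrightarrow> continuous_on {a..b} f \<and>
     (\<exists>p::nat \<Rightarrow> real. p 1 = a \<and> p (2*t+1) = b \<and>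
        (\<forall>i\<in>{1..2*t}. p i < p (Suc i)) \<and>
        (\<forall>i\<in>{1..2*t-1}. f (p i) = f (p (i+2))) \<and>
        f (p 1) = 0 \<and> f (p 2) = 1 \<and>
        (\<forall>i\<in>{1..2*t}. (odd i \<longrightarrow> strict_mono_on {p i..p (Suc i)} f) \<and>
                        (even i \<longrightarrow> strict_antimono_on {p i..p (Suc i)} f)))"

text \<open>R^d is modelled as extensional functions on {..<d} (coordinate x_1 is x 0).\<close>
definition cube :: "nat \<Rightarrow> (nat \<Rightarrow> real) set" where
  "cube d = PiE {..<d} (\<lambda>_. {0..1})"

definition lift_pt :: "nat \<Rightarrow> (nat \<Rightarrow> real) \<Rightarrow> real \<Rightarrow> (nat \<Rightarrow> real)" where
  "lift_pt d y z = (\<lambda>i. if i = 0 then z else if i < d then y (i - 1) else undefined)"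

end

theory Submission
  imports Defs
begin

text \<open>The \<open>k\<close>-th iterate of a tent map crosses between \<open>0\<close> and \<open>1\<close> \<open>2^k\<close> times, so on every
  line parallel to the first axis \<open>h\<close> takes the alternating values \<open>0, 1, 0, \<dots>\<close> at \<open>2^k + 1\<close>
  increasing points. A function whose restriction to the line has at most \<open>c\<close> threshold pieces
  misclassifies at least \<open>(2^k + 1 - c)/2\<close> of these points: a piece boundary separates at most one
  pair of consecutive points, and of two consecutive points in one piece one is misclassified.
  With \<open>c \<le> 2^k/4\<close> this is a quarter of the sample. The measure \<open>\<nu>\<close> is uniform on such a sample;
  \<open>\<mu>\<close> puts half its mass on thin slabs around a sample, chosen by uniform continuity so that \<open>h\<close>
  stays within \<open>1/4\<close> of the labels on them, and averaging over the translated samples inside the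
  slabs gives the bounds for \<open>\<mu>\<close>.\<close>

section \<open>Iterates of tent maps\<close>

locale tent_map =
  fixes f :: "real \<Rightarrow> real" and q :: real
  assumes peak: "0 < q" "q < 1" "f q = 1"
    and ends: "f 0 = 0" "f 1 = 0"
    and continuous: "continuous_on {0..1} f"
    and maps_into: "\<And>x. x \<in> {0..1} \<Longrightarrow> f x \<in> {0..1}"

lemma triangle_imp_tent_map:
  assumes "triangle 1 0 1 f"
  obtains q where "tent_map f q"
proof -
  from assms obtain p :: "nat \<Rightarrow> real" where cont: "continuous_on {0..1} f" and
    p: "p 1 = 0" "p 3 = 1" "\<forall>i\<in>{1..2}. p i < p (Suc i)"
    "\<forall>i\<in>{1..1}. f (p i) = f (p (i+2))" "f (p 1) = 0" "f (p 2) = 1"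
    "\<forall>i\<in>{1..2}. (odd i \<longrightarrow> strict_mono_on {p i..p (Suc i)} f) \<and>
                  (even i \<longrightarrow> strict_antimono_on {p i..p (Suc i)} f)"
    unfolding triangle_def by auto
  define q where "q = p 2"
  have q: "0 < q" "q < 1" "f 0 = 0" "f 1 = 0" "f q = 1"
    using p(1-6) p(3)[rule_format, of 1] p(3)[rule_format, of 2]
    by (auto simp: q_def numeral_3_eq_3 numeral_2_eq_2)
  have up: "mono_on {0..q} f" and down: "antimono_on {q..1} f"
    using p(1,2) p(7)[rule_format, of 1] p(7)[rule_format, of 2]
    by (auto simp: q_def numeral_3_eq_3 numeral_2_eq_2
        strict_mono_iff_mono strict_antimono_iff_antimono)
  have "f x \<in> {0..1}" if "x \<in> {0..1}" for x
  proof (cases "x \<le> q")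
    case True
    then show ?thesis
      using monotone_onD[OF up, of 0 x] monotone_onD[OF up, of x q] that q by auto
  next
    case False
    then show ?thesis
      using monotone_onD[OF down, of q x] monotone_onD[OF down, of x 1] that q by auto
  qed
  with q cont show ?thesis
    by (intro that[of q]) (unfold_locales, auto)
qed

definition oscillation_points :: "nat \<Rightarrow> (real \<Rightarrow> real) \<Rightarrow> (nat \<Rightarrow> real) \<Rightarrow> bool" where
  "oscillation_points k \<phi> t \<longleftrightarrow> (\<forall>i<2^k. t i < t (Suc i)) \<and>
     (\<forall>i\<le>2^k. t i \<in> {0..1} \<and> \<phi> (t i) = of_bool (odd i))"

lemma oscillation_pointsD:
  assumes "oscillation_points k \<phi> t"
  shows "\<forall>i<2^k. t i < t (Suc i)" "\<And>i. i \<le> 2^k \<Longrightarrow> t i \<in> {0..1}"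
    "\<And>i. i \<le> 2^k \<Longrightarrow> \<phi> (t i) = of_bool (odd i)"
  using assms unfolding oscillation_points_def by auto

context tent_map
begin

lemma iterate_maps_into: "x \<in> {0..1} \<Longrightarrow> (f^^k) x \<in> {0..1}"
proof (induction k)
  case (Suc k)
  then show ?case using maps_into[of "(f^^k) x"] by simp
qed simp

lemma continuous_on_iterate: "continuous_on {0..1} (f^^k)"
proof (induction k)
  case (Suc k)
  have "continuous_on {0..1} (f \<circ> (f^^k))"
    by (rule continuous_on_compose[OF Suc])
      (auto intro: continuous_on_subset[OF continuous] iterate_maps_into)
  then show ?case by simp
qed (simp add: continuous_on_id)

lemma iterate_oscillation_points: "\<exists>t. oscillation_points k (f^^k) t"
proof (induction k)
  case 0
  show ?case
    by (rule exI[of _ real]) (auto simp: oscillation_points_def le_Suc_eq)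
next
  case (Suc k)
  then obtain t where "oscillation_points k (f^^k) t" by blast
  note t = oscillation_pointsD[OF this]
  have "\<exists>s. t i < s \<and> s < t (Suc i) \<and> (f^^k) s = q" if i: "i < 2^k" for i
  proof -
    have c: "continuous_on {t i..t (Suc i)} (f^^k)"
      using t(2)[of i] t(2)[of "Suc i"] i
      by (intro continuous_on_subset[OF continuous_on_iterate]) auto
    have le: "t i \<le> t (Suc i)" using t(1) i by (auto intro: less_imp_le)
    obtain s where s: "t i \<le> s" "s \<le> t (Suc i)" "(f^^k) s = q"
    proof (cases "even i")
      case True
      then show ?thesis
        using IVT'[OF _ _ le c, of q] that t(3)[of i] t(3)[of "Suc i"] i peak by auto
    next
      case False
      then show ?thesis
        using IVT2'[OF _ _ le c, of q] that t(3)[of i] t(3)[of "Suc i"] i peak by auto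
    qed
    moreover have "s \<noteq> t i" "s \<noteq> t (Suc i)"
      using s(3) t(3)[of i] t(3)[of "Suc i"] i peak by auto
    ultimately show ?thesis by force
  qed
  then obtain s where s: "\<And>i. i < 2^k \<Longrightarrow> t i < s i \<and> s i < t (Suc i) \<and> (f^^k) (s i) = q"
    by metis
  \<comment> \<open>\<open>f\<^sup>k\<^sup>+\<^sup>1\<close> is \<open>f 0 = f 1 = 0\<close> at the old points and \<open>f q = 1\<close> at the points \<open>s i\<close> between them\<close>
  define t' where "t' j = (if even j then t (j div 2) else s (j div 2))" for j
  have "t' i < t' (Suc i)" if "i < 2^Suc k" for i
    using that s[of "i div 2"] by (cases "even i") (auto simp: t'_def)
  moreover have "t' i \<in> {0..1} \<and> (f^^Suc k) (t' i) = of_bool (odd i)" if "i \<le> 2^Suc k" for i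
  proof (cases "even i")
    case True
    then show ?thesis using that t(2,3)[of "i div 2"] ends by (auto simp: t'_def)
  next
    case False
    then have "i \<noteq> 2^Suc k" by auto
    then have "i div 2 < 2^k" using that by auto
    then show ?thesis
      using False s[of "i div 2"] t(2)[of "i div 2"] t(2)[of "Suc (i div 2)"] peak
      by (auto simp: t'_def)
  qed
  ultimately show ?case unfolding oscillation_points_def by blast
qed

end

section \<open>Crossing numbers and alternating samples\<close>

lemma Cr_attained:
  assumes "Cr u = enat c"
  obtains P where "finite P" "disjoint P" "\<Union>P = UNIV"
    "\<And>I. I \<in> P \<Longrightarrow> is_interval I \<and> (\<forall>x\<in>I. \<forall>y\<in>I. thr u x = thr u y)" "card P = c"
proof -
  let ?A = "{P. finite P \<and> {} \<notin> P \<and> disjoint P \<and> \<Union>P = UNIV \<and>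
              (\<forall>I\<in>P. is_interval I \<and> (\<forall>x\<in>I. \<forall>y\<in>I. thr u x = thr u y))}"
  have "?A \<noteq> {}"
  proof
    assume "?A = {}"
    then have "Cr u = \<infinity>" unfolding Cr_def by (simp only: image_empty Inf_empty top_enat_def)
    then show False using assms by simp
  qed
  then obtain P0 where "P0 \<in> ?A" by blast
  then have "Cr u \<in> (\<lambda>P. enat (card P)) ` ?A"
    unfolding Cr_def by (rule wellorder_InfI[OF imageI])
  then obtain P where P: "P \<in> ?A" and "Cr u = enat (card P)" by (rule imageE)
  then have "card P = c" using assms by simp
  moreover from P have "finite P" "disjoint P" "\<Union>P = UNIV"
    "\<And>I. I \<in> P \<Longrightarrow> is_interval I \<and> (\<forall>x\<in>I. \<forall>y\<in>I. thr u x = thr u y)"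
    by blast+
  ultimately show ?thesis by (intro that)
qed

lemma interval_partition_index:
  fixes P :: "real set set"
  assumes P: "disjoint P" "\<Union>P = UNIV" "\<And>I. I \<in> P \<Longrightarrow> is_interval I"
  obtains piece where "\<And>x. piece x \<in> P" "\<And>x. x \<in> piece x"
    "\<And>x w y. x \<le> w \<Longrightarrow> w \<le> y \<Longrightarrow> piece x = piece y \<Longrightarrow> piece w = piece x"
proof -
  have "\<forall>x. \<exists>I. I \<in> P \<and> x \<in> I"
    using P(2) by blast
  then obtain piece where piece: "\<And>x. piece x \<in> P \<and> x \<in> piece x"
    by metis
  have piece_unique: "piece x = I" if "I \<in> P" "x \<in> I" for x I
    using P(1) piece[of x] that unfolding disjoint_def by blast
  have "piece w = piece x" if "x \<le> w" "w \<le> y" "piece x = piece y" for x w y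
  proof -
    have "x \<in> piece x" "y \<in> piece x"
      using piece that(3) by metis+
    then have "w \<in> piece x"
      using P(3) piece that(1,2) unfolding is_interval_1 by blast
    then show ?thesis using piece_unique piece by blast
  qed
  with piece show ?thesis by (intro that[of piece]) auto
qed

lemma card_value_changes_less:
  fixes c :: "real \<Rightarrow> 'a" and z :: "nat \<Rightarrow> real"
  assumes convex: "\<And>x w y. x \<le> w \<Longrightarrow> w \<le> y \<Longrightarrow> c x = c y \<Longrightarrow> c w = c x"
    and P: "finite P" "range c \<subseteq> P"
    and z: "\<forall>i<N. z i < z (Suc i)"
  shows "card {i. i < N \<and> c (z i) \<noteq> c (z (Suc i))} < card P"
proof -
  define C where "C = {i. i < N \<and> c (z i) \<noteq> c (z (Suc i))}"
  have z_mono: "z i \<le> z j" if "i \<le> j" "j \<le> N" for i j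
    by (rule lift_Suc_mono_le_ivl[of "{..<N}"]) (use z that in \<open>auto intro: less_imp_le\<close>)
  have between: "c (z m) = c (z i)" if "i \<le> m" "m \<le> j" "j \<le> N" "c (z i) = c (z j)" for i m j
    using convex[of "z i" "z m" "z j"] z_mono[of i m] z_mono[of m j] that by simp
  \<comment> \<open>after each change the sample enters a value never taken before\<close>
  have "inj_on (\<lambda>i. c (z (Suc i))) C"
  proof (rule inj_onI)
    fix i j assume ij: "i \<in> C" "j \<in> C" "c (z (Suc i)) = c (z (Suc j))"
    show "i = j"
    proof (rule ccontr)
      assume "i \<noteq> j"
      then show False
        using between[of "Suc i" j "Suc j"] between[of "Suc j" i "Suc i"] ij
        by (cases "i < j") (auto simp: C_def)
    qed
  qed
  moreover have "(\<lambda>i. c (z (Suc i))) ` C \<subseteq> P - {c (z 0)}"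
  proof
    fix I assume "I \<in> (\<lambda>i. c (z (Suc i))) ` C"
    then obtain i where i: "i \<in> C" and I: "I = c (z (Suc i))" by blast
    have "c (z (Suc i)) \<noteq> c (z 0)"
    proof
      assume eq: "c (z (Suc i)) = c (z 0)"
      then have "c (z i) = c (z 0)" using between[of 0 i "Suc i"] i by (simp add: C_def)
      then show False using eq i by (simp add: C_def)
    qed
    moreover have "c (z (Suc i)) \<in> P" using P(2) by (simp add: image_subset_iff)
    ultimately show "I \<in> P - {c (z 0)}" using I by simp
  qed
  ultimately have "card C \<le> card (P - {c (z 0)})"
    using P(1) by (intro card_inj_on_le) auto
  also have "\<dots> < card P"
    using P by (intro card_Diff1_less) auto
  finally show ?thesis unfolding C_def .
qed

lemma misclassified_alternating_points:
  fixes z L :: "nat \<Rightarrow> real"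
  assumes z: "\<forall>i<N. z i < z (Suc i)" and L: "\<forall>i<N. L i \<noteq> L (Suc i)" and Cr: "Cr u = enat c"
  shows "N + 1 \<le> 2 * card {i. i \<le> N \<and> thr u (z i) \<noteq> L i} + c"
proof -
  obtain P where P: "finite P" "disjoint P" "\<Union>P = UNIV"
    "\<And>I. I \<in> P \<Longrightarrow> is_interval I \<and> (\<forall>x\<in>I. \<forall>y\<in>I. thr u x = thr u y)" "card P = c"
    using Cr_attained[OF Cr] by blast
  obtain piece where piece: "\<And>x. piece x \<in> P" "\<And>x. x \<in> piece x"
    "\<And>x w y. x \<le> w \<Longrightarrow> w \<le> y \<Longrightarrow> piece x = piece y \<Longrightarrow> piece w = piece x"
    using interval_partition_index[OF P(2,3)] P(4) by metis
  define Err where "Err = {i. i \<le> N \<and> thr u (z i) \<noteq> L i}"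
  have Err_finite: "finite Err" unfolding Err_def by simp
  define Same where "Same = {i. i < N \<and> piece (z i) = piece (z (Suc i))}"
  define Change where "Change = {i. i < N \<and> piece (z i) \<noteq> piece (z (Suc i))}"
  have "card Change < c"
    unfolding Change_def P(5)[symmetric]
  proof (rule card_value_changes_less[where c = piece and P = P and z = z and N = N])
    show "range piece \<subseteq> P" using piece(1) by blast
  qed (use piece(3) P(1) z in auto)
  moreover have "{..<N} = Same \<union> Change" "Same \<inter> Change = {}"
    unfolding Same_def Change_def by auto
  then have "N = card Same + card Change"
    by (metis card_Un_disjoint card_lessThan finite_Un finite_lessThan)
  \<comment> \<open>two consecutive points in one piece get the same class but have different labels\<close>
  moreover have "Same \<subseteq> Err \<union> (\<lambda>j. j - 1) ` Err"
  proof
    fix i assume i: "i \<in> Same"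
    then have "z (Suc i) \<in> piece (z i)"
      using piece(2)[of "z (Suc i)"] unfolding Same_def by simp
    then have "thr u (z i) = thr u (z (Suc i))"
      using P(4)[OF piece(1)] piece(2) by blast
    moreover have "L i \<noteq> L (Suc i)"
      using L i unfolding Same_def by blast
    ultimately have "i \<in> Err \<or> Suc i \<in> Err" using i unfolding Same_def Err_def by auto
    then show "i \<in> Err \<union> (\<lambda>j. j - 1) ` Err" by (auto intro: image_eqI[of _ _ "Suc i"])
  qed
  then have "card Same \<le> 2 * card Err"
  proof (rule card_mono[rotated, THEN order_trans])
    show "card (Err \<union> (\<lambda>j. j - 1) ` Err) \<le> 2 * card Err"
      using card_Un_le[of Err "(\<lambda>j. j - 1) ` Err"] card_image_le[OF Err_finite, of "\<lambda>j. j - 1"]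
      by linarith
  qed (simp add: Err_finite)
  ultimately show ?thesis unfolding Err_def by linarith
qed

lemma many_misclassified_alternating_points:
  fixes z :: "nat \<Rightarrow> real"
  assumes Cr: "ereal_of_enat (Cr u) \<le> ereal (2 powr (real k - 2))"
    and z: "\<forall>i<2^k. z i < z (Suc i)"
  shows "2^k + 1 \<le> 4 * card {i. i \<le> 2^k \<and> thr u (z i) \<noteq> of_bool (odd i)}"
proof -
  obtain c where c: "Cr u = enat c" using Cr by (cases "Cr u") auto
  have "real c \<le> 2 powr (real k - 2)" using Cr c by simp
  also have "\<dots> = 2^k / 4" by (simp add: powr_diff powr_realpow)
  finally have "real (4 * c) \<le> real (2^k)" by simp
  then have "4 * c \<le> 2^k" by (simp only: of_nat_le_iff)
  moreover have "2^k + 1 \<le> 2 * card {i. i \<le> 2^k \<and> thr u (z i) \<noteq> of_bool (odd i)} + c"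
    by (rule misclassified_alternating_points[OF z _ c]) simp
  ultimately show ?thesis by linarith
qed

lemma alternating_sample_loss:
  fixes z w :: "nat \<Rightarrow> real"
  assumes Cr: "ereal_of_enat (Cr u) \<le> ereal (2 powr (real k - 2))"
    and z: "\<forall>i<2^k. z i < z (Suc i)"
    and w: "\<forall>i\<le>2^k. \<bar>w i - of_bool (odd i)\<bar> \<le> e" and e: "e < 1/2"
  shows "(2^k + 1) / 4 \<le> (\<Sum>i\<le>2^k. \<bar>thr w i - thr u (z i)\<bar>)"
    and "(1/2 - e) * (2^k + 1) / 4 \<le> (\<Sum>i\<le>2^k. \<bar>w i - u (z i)\<bar>)"
proof -
  define Err where "Err = {i. i \<le> 2^k \<and> thr u (z i) \<noteq> of_bool (odd i)}"
  have "real (2^k + 1) \<le> real (4 * card Err)"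
    using many_misclassified_alternating_points[OF Cr z] unfolding Err_def of_nat_le_iff .
  then have Err: "(2^k + 1) / 4 \<le> real (card Err)" by simp
  have thr_w: "thr w i = of_bool (odd i)" if "i \<le> 2^k" for i
    using w[rule_format, OF that] e unfolding thr_def by (cases "odd i") auto
  have "real (card Err) * 1 \<le> (\<Sum>i\<in>Err. \<bar>thr w i - thr u (z i)\<bar>)"
  proof (rule sum_bounded_below)
    fix i assume "i \<in> Err"
    moreover have "thr u (z i) = 0 \<or> thr u (z i) = 1" by (simp add: thr_def)
    ultimately show "1 \<le> \<bar>thr w i - thr u (z i)\<bar>"
      using thr_w[of i] unfolding Err_def by (cases "odd i") auto
  qed
  also have "\<dots> \<le> (\<Sum>i\<le>2^k. \<bar>thr w i - thr u (z i)\<bar>)"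
    by (intro sum_mono2) (auto simp: Err_def)
  finally show "(2^k + 1) / 4 \<le> (\<Sum>i\<le>2^k. \<bar>thr w i - thr u (z i)\<bar>)"
    using Err by linarith
  have "real (card Err) * (1/2 - e) \<le> (\<Sum>i\<in>Err. \<bar>w i - u (z i)\<bar>)"
  proof (rule sum_bounded_below)
    fix i assume "i \<in> Err"
    then have "\<bar>w i - of_bool (odd i)\<bar> \<le> e" "thr u (z i) \<noteq> of_bool (odd i)"
      using w unfolding Err_def by auto
    then show "1/2 - e \<le> \<bar>w i - u (z i)\<bar>"
      unfolding thr_def by (cases "odd i") (auto split: if_splits)
  qed
  also have "\<dots> \<le> (\<Sum>i\<le>2^k. \<bar>w i - u (z i)\<bar>)"
    by (intro sum_mono2) (auto simp: Err_def)
  moreover have "(1/2 - e) * ((2^k + 1) / 4) \<le> (1/2 - e) * card Err"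
    using Err e by (intro mult_left_mono) auto
  ultimately show "(1/2 - e) * (2^k + 1) / 4 \<le> (\<Sum>i\<le>2^k. \<bar>w i - u (z i)\<bar>)"
    by (simp add: mult.commute)
qed

section \<open>A density concentrated on slabs\<close>

interpretation lborel_product: product_sigma_finite "\<lambda>_::nat. lborel :: real measure"
  by standard

lemma fun_upd_in_PiE_iff:
  assumes "i \<notin> S" "x \<in> extensional S"
  shows "x(i := z) \<in> PiE (insert i S) T \<longleftrightarrow> z \<in> T i \<and> x \<in> PiE S T"
  using assms by (auto simp: PiE_iff extensional_def)

lemma nn_integral_translates_lower_bound:
  fixes G :: "real \<Rightarrow> ennreal" and a :: "nat \<Rightarrow> real"
  assumes G[measurable]: "G \<in> borel_measurable borel" and \<delta>: "\<delta> > 0"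
    and C: "\<And>s. s \<in> {0..\<delta>} \<Longrightarrow> C \<le> (\<Sum>i<n. G (a i + s))"
  shows "C * ennreal \<delta> \<le> (\<integral>\<^sup>+z. (\<Sum>i<n. indicator {a i..a i + \<delta>} z) * G z \<partial>lborel)"
proof -
  have "(\<integral>\<^sup>+z. (\<Sum>i<n. indicator {a i..a i + \<delta>} z) * G z \<partial>lborel)
      = (\<Sum>i<n. \<integral>\<^sup>+z. indicator {a i..a i + \<delta>} z * G z \<partial>lborel)"
    unfolding sum_distrib_right by (rule nn_integral_sum) simp
  also have "\<dots> = (\<Sum>i<n. \<integral>\<^sup>+s. indicator {0..\<delta>} s * G (a i + s) \<partial>lborel)"
  proof (rule sum.cong[OF refl])
    fix i
    have "(\<integral>\<^sup>+z. indicator {a i..a i + \<delta>} z * G z \<partial>lborel)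
        = (\<integral>\<^sup>+s. indicator {a i..a i + \<delta>} (a i + 1 * s) * G (a i + 1 * s) \<partial>lborel)"
      using nn_integral_real_affine[of "\<lambda>z. indicator {a i..a i + \<delta>} z * G z" 1 "a i"] by simp
    also have "\<dots> = (\<integral>\<^sup>+s. indicator {0..\<delta>} s * G (a i + s) \<partial>lborel)"
      by (intro nn_integral_cong) (auto simp: indicator_def)
    finally show "(\<integral>\<^sup>+z. indicator {a i..a i + \<delta>} z * G z \<partial>lborel)
        = (\<integral>\<^sup>+s. indicator {0..\<delta>} s * G (a i + s) \<partial>lborel)" .
  qed
  also have "\<dots> = (\<integral>\<^sup>+s. indicator {0..\<delta>} s * (\<Sum>i<n. G (a i + s)) \<partial>lborel)"
    by (subst nn_integral_sum[symmetric]) (auto simp: sum_distrib_left)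
  also have "\<dots> \<ge> (\<integral>\<^sup>+s. C * indicator {0..\<delta>} s \<partial>lborel)"
    by (intro nn_integral_mono) (auto simp: indicator_def C)
  moreover have "(\<integral>\<^sup>+s. C * indicator {0..\<delta>} s \<partial>lborel) = C * ennreal \<delta>"
    using \<delta> by (simp add: nn_integral_cmult_indicator)
  ultimately show ?thesis by simp
qed

locale slab_density =
  fixes d n :: nat and \<delta> :: real and a :: "nat \<Rightarrow> real"
  assumes dim: "d \<ge> 1" and n: "n \<ge> 1" and \<delta>_pos: "\<delta> > 0"
    and slabs_in_unit: "\<And>i. i < n \<Longrightarrow> 0 \<le> a i \<and> a i + \<delta> \<le> 1"
begin

abbreviation "M \<equiv> PiM {..<d} (\<lambda>_. lborel :: real measure)"
abbreviation "M' \<equiv> PiM {1..<d} (\<lambda>_. lborel :: real measure)"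

definition slabs :: "real \<Rightarrow> ennreal" where
  "slabs z = (\<Sum>i<n. indicator {a i..a i + \<delta>} z)"

definition profile :: "real \<Rightarrow> ennreal" where
  "profile z = ennreal (1/2) + ennreal (1 / (2 * real n * \<delta>)) * slabs z"

definition \<rho> :: "(nat \<Rightarrow> real) \<Rightarrow> ennreal" where
  "\<rho> w = indicator (cube d) w * profile (w 0)"

definition rest_cube :: "(nat \<Rightarrow> real) set" where
  "rest_cube = PiE {1..<d} (\<lambda>_. {0..1})"

lemma lessThan_eq_insert_0: "{..<d} = insert 0 {1..<d}"
  using dim by auto

lemma slabs_measurable[measurable]: "slabs \<in> borel_measurable borel"
  unfolding slabs_def by measurable

lemma profile_measurable[measurable]: "profile \<in> borel_measurable borel"
  unfolding profile_def by measurable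

lemma cube_sets[measurable]: "cube d \<in> sets M"
  unfolding cube_def by (rule sets_PiM_I_finite) auto

lemma rest_cube_sets[measurable]: "rest_cube \<in> sets M'"
  unfolding rest_cube_def by (rule sets_PiM_I_finite) auto

lemma first_coordinate_measurable[measurable]: "(\<lambda>w::nat\<Rightarrow>real. w 0) \<in> borel_measurable M"
  using measurable_component_singleton[of 0 "{..<d}" "\<lambda>_. lborel"] dim by simp

lemma \<rho>_measurable[measurable]: "\<rho> \<in> borel_measurable M"
  unfolding \<rho>_def by measurable

lemma \<rho>_pos: "x \<in> cube d \<Longrightarrow> \<rho> x > 0"
  unfolding \<rho>_def profile_def by (simp, intro add_pos_nonneg) (auto simp: ennreal_inverse_positive)

lemma \<rho>_zero: "x \<notin> cube d \<Longrightarrow> \<rho> x = 0"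
  unfolding \<rho>_def by simp

lemma slabs_outside: "z \<notin> {0..1} \<Longrightarrow> slabs z = 0"
  unfolding slabs_def using slabs_in_unit by (intro sum.neutral) (force simp: indicator_def)

lemma fun_upd_in_cube_iff:
  assumes "x \<in> space M'"
  shows "x(0 := z) \<in> cube d \<longleftrightarrow> z \<in> {0..1} \<and> x \<in> rest_cube"
proof -
  have "x \<in> extensional {1..<d}"
    using assms by (simp add: space_PiM PiE_iff)
  then show ?thesis
    using fun_upd_in_PiE_iff[of 0 "{1..<d}" x z "\<lambda>_. {0..1}"]
    unfolding cube_def rest_cube_def lessThan_eq_insert_0 by simp
qed

lemma section_measurable:
  assumes [measurable]: "H \<in> borel_measurable M" and "x \<in> space M'"
  shows "(\<lambda>z. H (x(0 := z))) \<in> borel_measurable borel"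
proof -
  have "(\<lambda>z. x(0 := z)) \<in> measurable borel (PiM (insert 0 {1..<d}) (\<lambda>_. lborel))"
    using measurable_component_update[OF assms(2), of 0] by simp
  then show ?thesis
    using measurable_compose assms(1)[unfolded lessThan_eq_insert_0] by blast
qed

lemma nn_integral_density_sections:
  assumes H[measurable]: "H \<in> borel_measurable M"
  shows "(\<integral>\<^sup>+w. H w \<partial>density M \<rho>) =
    (\<integral>\<^sup>+x. indicator rest_cube x *
       (\<integral>\<^sup>+z. indicator {0..1} z * profile z * H (x(0 := z)) \<partial>lborel) \<partial>M')"
proof -
  have "(\<integral>\<^sup>+w. H w \<partial>density M \<rho>) = (\<integral>\<^sup>+w. \<rho> w * H w \<partial>M)"
    by (rule nn_integral_density) measurable
  also have "\<dots> = (\<integral>\<^sup>+x. (\<integral>\<^sup>+z. \<rho> (x(0 := z)) * H (x(0 := z)) \<partial>lborel) \<partial>M')"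
  proof -
    have "(\<lambda>w. \<rho> w * H w) \<in> borel_measurable (PiM (insert 0 {1..<d}) (\<lambda>_. lborel))"
      unfolding lessThan_eq_insert_0[symmetric] by measurable
    then show ?thesis
      unfolding lessThan_eq_insert_0 by (rule lborel_product.product_nn_integral_insert[rotated 2]) auto
  qed
  also have "\<dots> = (\<integral>\<^sup>+x. indicator rest_cube x *
       (\<integral>\<^sup>+z. indicator {0..1} z * profile z * H (x(0 := z)) \<partial>lborel) \<partial>M')"
  proof (rule nn_integral_cong)
    fix x assume x: "x \<in> space M'"
    note [measurable] = section_measurable[OF H x]
    have "\<rho> (x(0 := z)) * H (x(0 := z)) =
        indicator rest_cube x * (indicator {0..1} z * profile z * H (x(0 := z)))" for z
      using fun_upd_in_cube_iff[OF x, of z] by (simp add: \<rho>_def indicator_def)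
    then show "(\<integral>\<^sup>+z. \<rho> (x(0 := z)) * H (x(0 := z)) \<partial>lborel) =
        indicator rest_cube x * (\<integral>\<^sup>+z. indicator {0..1} z * profile z * H (x(0 := z)) \<partial>lborel)"
      by (simp add: nn_integral_cmult)
  qed
  finally show ?thesis .
qed

lemma emeasure_rest_cube: "emeasure M' rest_cube = 1"
  unfolding rest_cube_def by (subst lborel_product.emeasure_PiM) auto

lemma nn_integral_profile: "(\<integral>\<^sup>+z. indicator {0..1} z * profile z \<partial>lborel) = 1"
proof -
  have "indicator {0..1} z * profile z =
      ennreal (1/2) * indicator {0..1} z + ennreal (1 / (2 * real n * \<delta>)) * slabs z" for z
    using slabs_outside[of z] by (cases "z \<in> {0..1}") (simp_all add: profile_def)
  then have "(\<integral>\<^sup>+z. indicator {0..1} z * profile z \<partial>lborel) =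
      ennreal (1/2) + ennreal (1 / (2 * real n * \<delta>)) * (\<Sum>i<n. ennreal \<delta>)"
    using \<delta>_pos by (simp add: nn_integral_add nn_integral_cmult nn_integral_sum slabs_def)
  also have "\<dots> = ennreal (1/2 + 1 / (2 * real n * \<delta>) * (real n * \<delta>))"
    using \<delta>_pos by (simp add: ennreal_mult[symmetric] ennreal_of_nat_eq_real_of_nat ennreal_plus)
  also have "\<dots> = 1"
    using n \<delta>_pos by simp
  finally show ?thesis .
qed

lemma prob_space_density: "prob_space (density M \<rho>)"
proof (rule prob_spaceI)
  have "emeasure (density M \<rho>) (space (density M \<rho>)) = (\<integral>\<^sup>+w. 1 \<partial>density M \<rho>)"
    by simp
  also have "\<dots> = (\<integral>\<^sup>+x. indicator rest_cube x \<partial>M')"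
    by (subst nn_integral_density_sections) (simp_all add: nn_integral_profile)
  also have "\<dots> = emeasure M' rest_cube"
    by (rule nn_integral_indicator[OF rest_cube_sets])
  also have "\<dots> = 1"
    by (rule emeasure_rest_cube)
  finally show "emeasure (density M \<rho>) (space (density M \<rho>)) = 1" .
qed

lemma slabs_le_profile: "ennreal (1 / (2 * real n * \<delta>)) * slabs z \<le> indicator {0..1} z * profile z"
  using slabs_outside[of z] by (cases "z \<in> {0..1}") (simp_all add: profile_def)

lemma nn_integral_section_lower_bound:
  assumes H[measurable]: "H \<in> borel_measurable M" and H_nonneg: "\<And>w. 0 \<le> H w" and c: "0 \<le> c"
    and x: "x \<in> rest_cube"
    and sums: "\<And>s. s \<in> {0..\<delta>} \<Longrightarrow> real n * c \<le> (\<Sum>i<n. H (x(0 := a i + s)))"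
  shows "ennreal (c / 2) \<le> (\<integral>\<^sup>+z. indicator {0..1} z * profile z * ennreal (H (x(0 := z))) \<partial>lborel)"
proof -
  define K where "K = ennreal (1 / (2 * real n * \<delta>))"
  have K: "K * (ennreal (real n * c) * ennreal \<delta>) = ennreal (c / 2)"
    using n \<delta>_pos c by (simp add: K_def ennreal_mult[symmetric] field_simps)
  have "x \<in> space M'"
    using x sets.sets_into_space[OF rest_cube_sets] by blast
  then have [measurable]: "(\<lambda>z. ennreal (H (x(0 := z)))) \<in> borel_measurable borel"
    using section_measurable[OF H] by measurable
  have "ennreal (real n * c) * ennreal \<delta> \<le> (\<integral>\<^sup>+z. slabs z * ennreal (H (x(0 := z))) \<partial>lborel)"
    unfolding slabs_def
  proof (rule nn_integral_translates_lower_bound[OF _ \<delta>_pos])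
    fix s assume "s \<in> {0..\<delta>}"
    then have "ennreal (real n * c) \<le> ennreal (\<Sum>i<n. H (x(0 := a i + s)))"
      using sums by (intro ennreal_leI) auto
    then show "ennreal (real n * c) \<le> (\<Sum>i<n. ennreal (H (x(0 := a i + s))))"
      using H_nonneg by (simp add: sum_ennreal)
  qed simp
  then have "ennreal (c / 2) \<le> K * (\<integral>\<^sup>+z. slabs z * ennreal (H (x(0 := z))) \<partial>lborel)"
    unfolding K[symmetric] by (rule mult_left_mono) simp
  also have "\<dots> = (\<integral>\<^sup>+z. K * slabs z * ennreal (H (x(0 := z))) \<partial>lborel)"
    unfolding mult.assoc
    by (rule nn_integral_cmult[symmetric]) (simp only: measurable_lborel2, measurable)
  also have "\<dots> \<le> (\<integral>\<^sup>+z. indicator {0..1} z * profile z * ennreal (H (x(0 := z))) \<partial>lborel)"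
    using slabs_le_profile unfolding K_def by (intro nn_integral_mono mult_right_mono) auto
  finally show ?thesis .
qed

lemma nn_integral_density_lower_bound:
  assumes H[measurable]: "H \<in> borel_measurable M" and H_nonneg: "\<And>w. 0 \<le> H w" and c: "0 \<le> c"
    and sums: "\<And>x s. x \<in> rest_cube \<Longrightarrow> s \<in> {0..\<delta>} \<Longrightarrow>
      real n * c \<le> (\<Sum>i<n. H (x(0 := a i + s)))"
  shows "ennreal (c / 2) \<le> (\<integral>\<^sup>+w. ennreal (H w) \<partial>density M \<rho>)"
proof -
  have section_bound: "ennreal (c / 2) \<le>
      (\<integral>\<^sup>+z. indicator {0..1} z * profile z * ennreal (H (x(0 := z))) \<partial>lborel)"
    if "x \<in> rest_cube" for x
    by (rule nn_integral_section_lower_bound[OF H H_nonneg c that]) (rule sums[OF that])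
  have "ennreal (c / 2) = (\<integral>\<^sup>+x. ennreal (c / 2) * indicator rest_cube x \<partial>M')"
    using nn_integral_cmult_indicator[OF rest_cube_sets, of "ennreal (c / 2)"]
    by (simp only: emeasure_rest_cube mult_1_right)
  also have "\<dots> \<le> (\<integral>\<^sup>+x. indicator rest_cube x *
      (\<integral>\<^sup>+z. indicator {0..1} z * profile z * ennreal (H (x(0 := z))) \<partial>lborel) \<partial>M')"
    using section_bound by (intro nn_integral_mono) (auto simp: indicator_def)
  also have "\<dots> = (\<integral>\<^sup>+w. ennreal (H w) \<partial>density M \<rho>)"
    by (rule nn_integral_density_sections[symmetric]) measurable
  finally show ?thesis .
qed

lemma fun_upd_slab_in_cube:
  assumes "x \<in> rest_cube" "s \<in> {0..\<delta>}" "i < n"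
  shows "x(0 := a i + s) \<in> cube d"
  using assms slabs_in_unit[of i] sets.sets_into_space[OF rest_cube_sets]
  by (subst fun_upd_in_cube_iff) auto

end

section \<open>The two hard distributions\<close>

lemma lift_pt_tail:
  assumes "d \<ge> 1" "x \<in> extensional {1..<d}"
  shows "lift_pt d (\<lambda>j. if j < d - 1 then x (Suc j) else undefined) z = x(0 := z)"
  using assms unfolding lift_pt_def extensional_def by (auto simp: fun_eq_iff)

lemma (in slab_density) section_sample_loss:
  fixes v :: "real \<Rightarrow> real" and g :: "(nat \<Rightarrow> real) \<Rightarrow> real" and k :: nat
  assumes n_eq: "n = 2^k + 1"
    and v_near: "\<And>i s. i < n \<Longrightarrow> s \<in> {0..\<delta>} \<Longrightarrow> \<bar>v (a i + s) - of_bool (odd i)\<bar> \<le> 1/4"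
    and a_inc: "\<forall>i<2^k. a i < a (Suc i)"
    and Cr: "\<forall>y\<in>PiE {..<d-1} (\<lambda>_. UNIV).
      ereal_of_enat (Cr (g \<circ> lift_pt d y)) \<le> ereal (2 powr (real k - 2))"
    and x: "x \<in> rest_cube" and s: "s \<in> {0..\<delta>}"
  shows "real n * (1/4) \<le> (\<Sum>i<n. \<bar>thr v (a i + s) - thr g (x(0 := a i + s))\<bar>)"
    and "real n * (1/16) \<le> (\<Sum>i<n. \<bar>v (a i + s) - g (x(0 := a i + s))\<bar>)"
proof -
  have n_le: "{..<n} = {..2^k}"
    using n_eq lessThan_Suc_atMost by auto
  define y where "y = (\<lambda>j. if j < d - 1 then x (Suc j) else undefined)"
  have "y \<in> PiE {..<d-1} (\<lambda>_. UNIV)"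
    by (auto simp: y_def PiE_iff extensional_def)
  note Cr_y = Cr[rule_format, OF this]
  have "x \<in> extensional {1..<d}"
    using x by (simp add: rest_cube_def PiE_iff)
  then have g_section: "g (x(0 := z)) = g (lift_pt d y z)" for z
    unfolding y_def using lift_pt_tail[OF dim] by simp
  have inc: "\<forall>i<2^k. a i + s < a (Suc i) + s"
    using a_inc by simp
  have near: "\<forall>i\<le>2^k. \<bar>v (a i + s) - of_bool (odd i)\<bar> \<le> 1/4"
    using v_near s n_le by blast
  show "real n * (1/4) \<le> (\<Sum>i<n. \<bar>thr v (a i + s) - thr g (x(0 := a i + s))\<bar>)"
    and "real n * (1/16) \<le> (\<Sum>i<n. \<bar>v (a i + s) - g (x(0 := a i + s))\<bar>)"
    using alternating_sample_loss[OF Cr_y inc near] n_eq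
    unfolding n_le by (simp_all add: g_section thr_def)
qed

lemma (in slab_density) misclassification_density_bounds:
  fixes v :: "real \<Rightarrow> real" and h g :: "(nat \<Rightarrow> real) \<Rightarrow> real" and k :: nat
  assumes n_eq: "n = 2^k + 1"
    and v[measurable]: "v \<in> borel_measurable borel"
    and v_near: "\<And>i s. i < n \<Longrightarrow> s \<in> {0..\<delta>} \<Longrightarrow> \<bar>v (a i + s) - of_bool (odd i)\<bar> \<le> 1/4"
    and a_inc: "\<forall>i<2^k. a i < a (Suc i)"
    and h: "\<And>w. w \<in> cube d \<Longrightarrow> h w = v (w 0)"
    and g[measurable]: "g \<in> borel_measurable M"
    and Cr: "\<forall>y\<in>PiE {..<d-1} (\<lambda>_. UNIV).
      ereal_of_enat (Cr (g \<circ> lift_pt d y)) \<le> ereal (2 powr (real k - 2))"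
  shows "1/32 \<le> (\<integral>\<^sup>+w. ennreal \<bar>h w - g w\<bar> \<partial>density M \<rho>)"
    and "1/8 \<le> (\<integral>\<^sup>+w. ennreal \<bar>thr h w - thr g w\<bar> \<partial>density M \<rho>)"
proof -
  note loss = section_sample_loss[OF n_eq v_near a_inc Cr]
  define H_abs where "H_abs w = indicator (cube d) w * \<bar>v (w 0) - g w\<bar>" for w
  have "ennreal ((1/16) / 2) \<le> (\<integral>\<^sup>+w. ennreal (H_abs w) \<partial>density M \<rho>)"
  proof (rule nn_integral_density_lower_bound)
    fix x s assume "x \<in> rest_cube" "s \<in> {0..\<delta>}"
    then show "real n * (1/16) \<le> (\<Sum>i<n. H_abs (x(0 := a i + s)))"
      using loss(2) fun_upd_slab_in_cube by (simp add: H_abs_def)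
  qed (auto simp: H_abs_def)
  also have "\<dots> \<le> (\<integral>\<^sup>+w. ennreal \<bar>h w - g w\<bar> \<partial>density M \<rho>)"
    by (intro nn_integral_mono ennreal_leI) (simp add: H_abs_def h indicator_def)
  finally show "1/32 \<le> (\<integral>\<^sup>+w. ennreal \<bar>h w - g w\<bar> \<partial>density M \<rho>)"
    by (simp add: ennreal_divide_numeral[symmetric])
  define H_thr where "H_thr w = indicator (cube d) w * \<bar>thr (\<lambda>w. v (w 0)) w - thr g w\<bar>" for w
  have "ennreal ((1/4) / 2) \<le> (\<integral>\<^sup>+w. ennreal (H_thr w) \<partial>density M \<rho>)"
  proof (rule nn_integral_density_lower_bound)
    fix x s assume "x \<in> rest_cube" "s \<in> {0..\<delta>}"
    then show "real n * (1/4) \<le> (\<Sum>i<n. H_thr (x(0 := a i + s)))"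
      using loss(1) fun_upd_slab_in_cube by (simp add: H_thr_def thr_def)
  qed (auto simp: H_thr_def thr_def)
  also have "\<dots> \<le> (\<integral>\<^sup>+w. ennreal \<bar>thr h w - thr g w\<bar> \<partial>density M \<rho>)"
    by (intro nn_integral_mono ennreal_leI) (simp add: H_thr_def h indicator_def thr_def)
  finally show "1/8 \<le> (\<integral>\<^sup>+w. ennreal \<bar>thr h w - thr g w\<bar> \<partial>density M \<rho>)"
    by (simp add: ennreal_divide_numeral[symmetric])
qed

lemma ennreal_le_sum_divide:
  assumes "\<And>i. i \<in> A \<Longrightarrow> 0 \<le> f i" "c * real m \<le> sum f A" "0 < m" "0 \<le> c"
  shows "ennreal c \<le> (\<Sum>i\<in>A. ennreal (f i)) / of_nat m"
proof -
  have "(\<Sum>i\<in>A. ennreal (f i)) / of_nat m = ennreal (sum f A / real m)"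
    using assms by (simp add: sum_ennreal ennreal_of_nat_eq_real_of_nat divide_ennreal sum_nonneg)
  moreover have "c \<le> sum f A / real m"
    using assms by (simp add: pos_le_divide_eq)
  ultimately show ?thesis by (simp add: ennreal_leI)
qed

lemma misclassification_pmf_bounds:
  fixes P :: "nat \<Rightarrow> 'a" and h g :: "'a \<Rightarrow> real" and u :: "real \<Rightarrow> real" and z :: "nat \<Rightarrow> real"
  assumes P: "inj_on P {..2^k}"
    and h: "\<And>i. i \<le> 2^k \<Longrightarrow> h (P i) = of_bool (odd i)"
    and g: "\<And>i. i \<le> 2^k \<Longrightarrow> g (P i) = u (z i)"
    and Cr: "ereal_of_enat (Cr u) \<le> ereal (2 powr (real k - 2))"
    and z: "\<forall>i<2^k. z i < z (Suc i)"
  shows "1/8 \<le> (\<integral>\<^sup>+x. ennreal \<bar>h x - g x\<bar> \<partial>measure_pmf (pmf_of_set (P ` {..2^k})))"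
    and "1/4 \<le> (\<integral>\<^sup>+x. ennreal \<bar>thr h x - thr g x\<bar> \<partial>measure_pmf (pmf_of_set (P ` {..2^k})))"
proof -
  have average: "(\<integral>\<^sup>+x. ennreal (F x) \<partial>measure_pmf (pmf_of_set (P ` {..2^k}))) =
      (\<Sum>i\<le>2^k. ennreal (F (P i))) / of_nat (2^k + 1)" for F
    using P by (simp add: nn_integral_pmf_of_set sum.reindex card_image)
  have "\<forall>i\<le>2^k. \<bar>h (P i) - of_bool (odd i)\<bar> \<le> 0"
    using h by simp
  note loss = alternating_sample_loss[OF Cr z this]
  have "(1/2 - 0) * (2^k + 1) / 4 \<le> (\<Sum>i\<le>2^k. \<bar>h (P i) - g (P i)\<bar>)"
    using loss(2) g by simp
  then have "ennreal (1/8) \<le> (\<Sum>i\<le>2^k. ennreal \<bar>h (P i) - g (P i)\<bar>) / of_nat (2^k + 1)"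
    by (intro ennreal_le_sum_divide) auto
  then show "1/8 \<le> (\<integral>\<^sup>+x. ennreal \<bar>h x - g x\<bar> \<partial>measure_pmf (pmf_of_set (P ` {..2^k})))"
    by (simp add: average ennreal_divide_numeral[symmetric])
  have "(2^k + 1) / 4 \<le> (\<Sum>i\<le>2^k. \<bar>thr h (P i) - thr g (P i)\<bar>)"
    using loss(1) g by (simp add: thr_def)
  then have "ennreal (1/4) \<le> (\<Sum>i\<le>2^k. ennreal \<bar>thr h (P i) - thr g (P i)\<bar>) / of_nat (2^k + 1)"
    by (intro ennreal_le_sum_divide) auto
  then show "1/4 \<le> (\<integral>\<^sup>+x. ennreal \<bar>thr h x - thr g x\<bar> \<partial>measure_pmf (pmf_of_set (P ` {..2^k})))"
    by (simp add: average ennreal_divide_numeral[symmetric])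
qed

lemma shrunken_windows:
  fixes \<phi> :: "real \<Rightarrow> real" and t :: "nat \<Rightarrow> real"
  assumes \<phi>: "continuous_on {0..1} \<phi>" and t: "\<And>i. i \<le> N \<Longrightarrow> t i \<in> {0..1}" and e: "0 < e"
  obtains \<delta> where "0 < \<delta>" "\<delta> < 1"
    "\<And>i s. i \<le> N \<Longrightarrow> s \<in> {0..\<delta>} \<Longrightarrow>
       (1 - \<delta>) * t i + s \<in> {0..1} \<and> \<bar>\<phi> ((1 - \<delta>) * t i + s) - \<phi> (t i)\<bar> < e"
proof -
  obtain \<delta>0 where \<delta>0: "\<delta>0 > 0"
    "\<And>x x'. x \<in> {0..1} \<Longrightarrow> x' \<in> {0..1} \<Longrightarrow> dist x' x < \<delta>0 \<Longrightarrow> dist (\<phi> x') (\<phi> x) < e"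
    using compact_uniformly_continuous[OF \<phi> compact_Icc] e
    unfolding uniformly_continuous_on_def by metis
  define \<delta> where "\<delta> = min (\<delta>0/2) (1/2)"
  have \<delta>: "0 < \<delta>" "\<delta> < 1" "\<delta> < \<delta>0"
    using \<delta>0 by (auto simp: \<delta>_def)
  have "(1 - \<delta>) * t i + s \<in> {0..1} \<and> \<bar>\<phi> ((1 - \<delta>) * t i + s) - \<phi> (t i)\<bar> < e"
    if i: "i \<le> N" and s: "s \<in> {0..\<delta>}" for i s
  proof -
    have ti: "0 \<le> t i" "t i \<le> 1" using t[OF i] by auto
    have "0 \<le> (1 - \<delta>) * t i" "(1 - \<delta>) * t i \<le> 1 - \<delta>"
      using ti \<delta> by (auto simp: mult_left_le)
    then have in01: "(1 - \<delta>) * t i + s \<in> {0..1}" using s by auto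
    have "0 \<le> \<delta> * t i" "\<delta> * t i \<le> \<delta>"
      using ti \<delta> by (auto simp: mult_left_le)
    have "dist ((1 - \<delta>) * t i + s) (t i) = \<bar>s - \<delta> * t i\<bar>"
      by (simp add: dist_real_def algebra_simps)
    also have "\<dots> \<le> \<delta>"
      using \<open>0 \<le> \<delta> * t i\<close> \<open>\<delta> * t i \<le> \<delta>\<close> s by auto
    finally have "dist ((1 - \<delta>) * t i + s) (t i) < \<delta>0"
      using \<delta> by simp
    then show ?thesis
      using \<delta>0(2)[OF t[OF i] in01] in01 by (simp add: dist_real_def)
  qed
  with \<delta> show ?thesis by (intro that) auto
qed

lemma uniform_hard_measure:
  fixes \<phi> :: "real \<Rightarrow> real" and t :: "nat \<Rightarrow> real"
  assumes d: "d \<ge> 1" and t: "oscillation_points k \<phi> t"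
  shows "\<exists>S. finite S \<and> S \<subseteq> cube d \<and> card S = 2^k + 1 \<and>
    (\<forall>g::(nat \<Rightarrow> real) \<Rightarrow> real.
      (\<forall>y\<in>PiE {..<d-1} (\<lambda>_. UNIV).
         ereal_of_enat (Cr (g \<circ> lift_pt d y)) \<le> ereal (2 powr (real k - 2))) \<longrightarrow>
      1/8 \<le> (\<integral>\<^sup>+x. ennreal \<bar>\<phi> (x 0) - g x\<bar> \<partial>measure_pmf (pmf_of_set S)) \<and>
      1/4 \<le> (\<integral>\<^sup>+x. ennreal \<bar>thr (\<lambda>x. \<phi> (x 0)) x - thr g x\<bar> \<partial>measure_pmf (pmf_of_set S)))"
proof -
  note t = oscillation_pointsD[OF t]
  define y0 where "y0 = (\<lambda>j::nat. if j < d - 1 then (0::real) else undefined)"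
  have y0: "y0 \<in> PiE {..<d-1} (\<lambda>_. UNIV)"
    by (auto simp: y0_def PiE_iff extensional_def)
  define P where "P i = lift_pt d y0 (t i)" for i
  have P_0: "P i 0 = t i" for i
    by (simp add: P_def lift_pt_def)
  have "strict_mono_on {..2^k} t"
  proof (rule strict_mono_onI)
    fix i j :: nat assume ij: "i \<in> {..2^k}" "j \<in> {..2^k}" "i < j"
    show "t i < t j"
      by (rule lift_Suc_mono_less_ivl[of "{..<2^k}"]) (use t(1) ij in auto)
  qed
  then have inj_t: "inj_on t {..2^k}"
    by (rule strict_mono_on_imp_inj_on)
  have inj: "inj_on P {..2^k}"
  proof (rule inj_onI)
    fix i j assume "i \<in> {..2^k}" "j \<in> {..2^k}" "P i = P j"
    moreover from \<open>P i = P j\<close> have "t i = t j"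
      using P_0[of i] P_0[of j] by simp
    ultimately show "i = j" using inj_t by (auto dest: inj_onD)
  qed
  have "P i \<in> cube d" if "i \<le> 2^k" for i
    using t(2)[OF that] d by (auto simp: P_def cube_def lift_pt_def y0_def PiE_iff extensional_def)
  then have "P ` {..2^k} \<subseteq> cube d" by blast
  moreover have "card (P ` {..2^k}) = 2^k + 1"
    using card_image[OF inj] by simp
  moreover have "1/8 \<le> (\<integral>\<^sup>+x. ennreal \<bar>\<phi> (x 0) - g x\<bar> \<partial>measure_pmf (pmf_of_set (P ` {..2^k}))) \<and>
      1/4 \<le> (\<integral>\<^sup>+x. ennreal \<bar>thr (\<lambda>x. \<phi> (x 0)) x - thr g x\<bar> \<partial>measure_pmf (pmf_of_set (P ` {..2^k})))"
    if "\<forall>y\<in>PiE {..<d-1} (\<lambda>_. UNIV).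
       ereal_of_enat (Cr (g \<circ> lift_pt d y)) \<le> ereal (2 powr (real k - 2))" for g
    using misclassification_pmf_bounds[OF inj, of "\<lambda>x. \<phi> (x 0)" g "g \<circ> lift_pt d y0" t]
      that[rule_format, OF y0] t(1,3) unfolding P_def by (simp add: lift_pt_def)
  ultimately show ?thesis by blast
qed

lemma density_hard_measure:
  fixes \<phi> :: "real \<Rightarrow> real" and t :: "nat \<Rightarrow> real"
  assumes d: "d \<ge> 1" and \<phi>: "continuous_on {0..1} \<phi>" and t: "oscillation_points k \<phi> t"
  shows "\<exists>\<rho>. \<rho> \<in> borel_measurable (PiM {..<d} (\<lambda>_. lborel)) \<and> (\<forall>x\<in>cube d. \<rho> x > 0) \<and>
    (\<forall>x\<in>space (PiM {..<d} (\<lambda>_. lborel)) - cube d. \<rho> x = 0) \<and>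
    prob_space (density (PiM {..<d} (\<lambda>_. lborel)) \<rho>) \<and>
    (\<forall>g. g \<in> borel_measurable (PiM {..<d} (\<lambda>_. lborel)) \<and>
      (\<forall>y\<in>PiE {..<d-1} (\<lambda>_. UNIV).
         ereal_of_enat (Cr (g \<circ> lift_pt d y)) \<le> ereal (2 powr (real k - 2))) \<longrightarrow>
      1/32 \<le> (\<integral>\<^sup>+x. ennreal \<bar>\<phi> (x 0) - g x\<bar> \<partial>density (PiM {..<d} (\<lambda>_. lborel)) \<rho>) \<and>
      1/8 \<le> (\<integral>\<^sup>+x. ennreal \<bar>thr (\<lambda>x. \<phi> (x 0)) x - thr g x\<bar>
        \<partial>density (PiM {..<d} (\<lambda>_. lborel)) \<rho>))"
proof -
  note t = oscillation_pointsD[OF t]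
  obtain \<delta> where \<delta>_bounds: "0 < \<delta>" "\<delta> < 1" and windows: "\<And>i s. i \<le> 2^k \<Longrightarrow> s \<in> {0..\<delta>} \<Longrightarrow>
      (1 - \<delta>) * t i + s \<in> {0..1} \<and> \<bar>\<phi> ((1 - \<delta>) * t i + s) - \<phi> (t i)\<bar> < 1/4"
    using shrunken_windows[where N = "2^k" and t = t and e = "1/4", OF \<phi> t(2)] by auto
  define a where "a i = (1 - \<delta>) * t i" for i
  interpret slab_density d "2^k + 1" \<delta> a
    using d \<delta>_bounds windows[of _ 0] windows[of _ \<delta>] by unfold_locales (auto simp: a_def)
  \<comment> \<open>\<open>\<phi>\<close> need not be measurable off \<open>[0, 1]\<close>, so it is replaced by its constant extension\<close>
  define v where "v z = \<phi> (max 0 (min 1 z))" for z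
  have "continuous_on UNIV v"
    unfolding v_def by (rule continuous_on_compose2[OF \<phi>]) (auto intro!: continuous_intros)
  then have v_measurable: "v \<in> borel_measurable borel"
    by (rule borel_measurable_continuous_onI)
  have v_near: "\<bar>v (a i + s) - of_bool (odd i)\<bar> \<le> 1/4" if "i < 2^k + 1" "s \<in> {0..\<delta>}" for i s
    using windows[of i s] t(3)[of i] that by (simp add: v_def a_def)
  have a_inc: "\<forall>i<2^k. a i < a (Suc i)"
    using t(1) \<delta>_bounds(2) by (auto simp: a_def intro: mult_strict_left_mono)
  have v_cube: "\<phi> (w 0) = v (w 0)" if "w \<in> cube d" for w
    using that d by (auto simp: v_def cube_def PiE_iff)
  show ?thesis
    using \<rho>_measurable \<rho>_pos \<rho>_zero prob_space_density
      misclassification_density_bounds[OF refl v_measurable v_near a_inc, of "\<lambda>x. \<phi> (x 0)"] v_cube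
    by blast
qed

theorem theorem3p12:
  fixes k d :: nat and f :: "real \<Rightarrow> real"
  assumes "k \<ge> 1" and "d \<ge> 1" and "triangle 1 0 1 f"
  defines "h \<equiv> (\<lambda>x::nat \<Rightarrow> real. (f ^^ k) (x 0))"
  shows "\<exists>(\<mu>::(nat \<Rightarrow> real) measure) (\<nu>::(nat \<Rightarrow> real) pmf) \<rho> S.
     \<rho> \<in> borel_measurable (PiM {..<d} (\<lambda>_. lborel)) \<and>
     (\<forall>x\<in>cube d. \<rho> x > 0) \<and>
     (\<forall>x\<in>space (PiM {..<d} (\<lambda>_. lborel)) - cube d. \<rho> x = 0) \<and>
     \<mu> = density (PiM {..<d} (\<lambda>_. lborel)) \<rho> \<and> prob_space \<mu> \<and>
     finite S \<and> S \<subseteq> cube d \<and> card S = 2 ^ k + 1 \<and> \<nu> = pmf_of_set S \<and>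
     (\<forall>g::(nat \<Rightarrow> real) \<Rightarrow> real.
        g \<in> borel_measurable (PiM {..<d} (\<lambda>_. lborel)) \<and>
        (\<forall>y\<in>PiE {..<d-1} (\<lambda>_. UNIV).
            ereal_of_enat (Cr (g \<circ> lift_pt d y)) \<le> ereal (2 powr (real k - 2)))
        \<longrightarrow>
        (\<integral>\<^sup>+x. ennreal \<bar>h x - g x\<bar> \<partial>\<mu>) \<ge> 1/32 \<and>
        (\<integral>\<^sup>+x. ennreal \<bar>thr h x - thr g x\<bar> \<partial>\<mu>) \<ge> 1/8 \<and>
        (\<integral>\<^sup>+x. ennreal \<bar>h x - g x\<bar> \<partial>measure_pmf \<nu>) \<ge> 1/8 \<and>
        (\<integral>\<^sup>+x. ennreal \<bar>thr h x - thr g x\<bar> \<partial>measure_pmf \<nu>) \<ge> 1/4)"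
proof -
  obtain q where "tent_map f q"
    using triangle_imp_tent_map[OF assms(3)] .
  then interpret tent_map f q .
  obtain t where t: "oscillation_points k (f^^k) t"
    using iterate_oscillation_points by blast
  show ?thesis
    using density_hard_measure[OF assms(2) continuous_on_iterate t]
      uniform_hard_measure[OF assms(2) t]
    unfolding h_def
    by (elim exE conjE) (intro exI conjI allI impI; (rule refl | assumption | blast))
qed

end
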